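(* $${}_4F_3\!\left(\tfrac13,\tfrac13,\tfrac23,\tfrac23;\tfrac43,\tfrac43,1;1\right)=\frac{\beta(1/3,1/3)^2}{27}.$$
   Context: $\beta$ is the Beta function and ${}_4F_3(a_1,a_2,a_3,a_4;b_1,b_2,b_3;x)=\sum_{n=0}^\infty\frac{(a_1)_n(a_2)_n(a_3)_n(a_4)_n}{(b_1)_n(b_2)_n(b_3)_n}\frac{x^n}{n!}$ with $(a)_n=a(a+1)\cdots(a+n-1)$, $(a)_0=1$. *)

theory Defs
  imports "HOL-Analysis.Analysis"
begin

definition hyp4F3_term :: "real \<Rightarrow> real \<Rightarrow> real \<Rightarrow> real \<Rightarrow> real \<Rightarrow> real \<Rightarrow> real \<Rightarrow> real \<Rightarrow> nat \<Rightarrow> real" where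
  "hyp4F3_term a1 a2 a3 a4 b1 b2 b3 x n =
     pochhammer a1 n * pochhammer a2 n * pochhammer a3 n * pochhammer a4 n /
     (pochhammer b1 n * pochhammer b2 n * pochhammer b3 n) * x ^ n / fact n"

definition hyp4F3 :: "real \<Rightarrow> real \<Rightarrow> real \<Rightarrow> real \<Rightarrow> real \<Rightarrow> real \<Rightarrow> real \<Rightarrow> real \<Rightarrow> real" where
  "hyp4F3 a1 a2 a3 a4 b1 b2 b3 x = (\<Sum>n. hyp4F3_term a1 a2 a3 a4 b1 b2 b3 x n)"

end

theory Submission
  imports Defs
begin

text \<open>
  Let \<open>a\<^sub>n = ((2/3)\<^sub>n / n!) / (3n+1)\<close>.  The \<open>n\<close>-th term of the series is exactly \<open>a\<^sub>n\<^sup>2\<close>,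
  and an Euler Beta integral gives \<open>\<Sum> a\<^sub>n = \<kappa> := B(1/3,1/3)/3\<close>.  So the claim is
  \<open>\<Sum> a\<^sub>n\<^sup>2 = \<kappa>\<^sup>2/3\<close>.  Put \<open>P(q) = \<Sum> a\<^sub>n q\<^sup>n\<close>; then \<open>z P(z\<^sup>3) = \<integral>\<^sub>0\<^sup>z (1 - w\<^sup>3)\<^sup>-\<^sup>2\<^sup>/\<^sup>3 dw\<close> is the
  Schwarz-Christoffel map of the unit disc onto an equilateral triangle.  Concretely, the
  boundary curve \<open>F(\<theta>) = e\<^sup>i\<^sup>\<theta> P(e\<^sup>3\<^sup>i\<^sup>\<theta>)\<close> has, for \<open>0 < \<theta> < 2\<pi>/3\<close>, derivative
  \<open>i e\<^sup>i\<^sup>\<theta> (1 - e\<^sup>3\<^sup>i\<^sup>\<theta>)\<^sup>-\<^sup>2\<^sup>/\<^sup>3\<close>, a positive multiple of \<open>e\<^sup>5\<^sup>\<pi>\<^sup>i\<^sup>/\<^sup>6\<close>, so \<open>F\<close> stays on the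
  side \<open>Re w + \<surd>3 Im w = \<kappa>\<close> through \<open>F(0) = \<kappa>\<close>.  On that line \<open>|w|\<^sup>2 = \<kappa>\<^sup>2/3 + 2/(3\<kappa>) Re w\<^sup>3\<close>,
  which yields the boundary identity \<open>|P(q)|\<^sup>2 = \<kappa>\<^sup>2/3 + 2/(3\<kappa>) Re (q P(q)\<^sup>3)\<close> for \<open>|q| = 1\<close>.
  Averaging it over the \<open>3N\<close>-th roots of unity with \<open>P\<close> replaced by its truncation \<open>P\<^sub>N\<close>
  (Parseval for \<open>|P\<^sub>N|\<^sup>2\<close>; \<open>q P\<^sub>N(q)\<^sup>3\<close> has no constant term) gives
  \<open>|\<Sum>\<^sub>n\<^sub><\<^sub>N a\<^sub>n\<^sup>2 - \<kappa>\<^sup>2/3| \<le> 4\<kappa> (\<kappa> - \<Sum>\<^sub>n\<^sub><\<^sub>N a\<^sub>n)\<close>, and letting \<open>N \<rightarrow> \<infinity>\<close> finishes the proof.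
\<close>

section \<open>Negative binomial coefficients\<close>

text \<open>\<open>negbin \<alpha> n\<close> is the coefficient of \<open>z\<^sup>n\<close> in
  \<open>(1 - z)\<^sup>-\<^sup>\<alpha>\<close>.\<close>

definition negbin :: "real \<Rightarrow> nat \<Rightarrow> real" where
  "negbin \<alpha> n = pochhammer \<alpha> n / fact n"

lemma negbin_nonneg: "0 < \<alpha> \<Longrightarrow> 0 \<le> negbin \<alpha> n"
  unfolding negbin_def by (simp add: pochhammer_nonneg)

text \<open>For \<open>0 < \<alpha> \<le> 1\<close> the coefficients decrease from \<open>1\<close>;
  this gives the geometric majorant used for termwise integration.\<close>
lemma negbin_le_one:
  assumes "0 < \<alpha>" "\<alpha> \<le> 1"
  shows "negbin \<alpha> n \<le> 1"
proof (induction n)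
  case 0 then show ?case by (simp add: negbin_def)
next
  case (Suc n)
  have step: "negbin \<alpha> (Suc n) = negbin \<alpha> n * (n + \<alpha>) / (n + 1)"
    unfolding negbin_def by (simp add: pochhammer_Suc field_simps)
  have "negbin \<alpha> n * (real n + \<alpha>) \<le> 1 * (real n + 1)"
    using Suc assms negbin_nonneg[OF assms(1)] by (intro mult_mono) auto
  then show ?case unfolding step by (simp add: divide_le_eq)
qed

lemma negbin_gchoose: "(- of_real \<alpha> gchoose n :: 'a :: {real_normed_field}) = (-1)^n * of_real (negbin \<alpha> n)"
  unfolding negbin_def gbinomial_pochhammer by (simp add: pochhammer_of_real[symmetric])

lemma negbin_sums_real:
  assumes "\<bar>x\<bar> < 1"
  shows "(\<lambda>n. negbin \<alpha> n * x^n) sums (1 - x) powr (-\<alpha>)"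
proof -
  have "((-\<alpha>) gchoose n) * (-x)^n = negbin \<alpha> n * x^n" for n
    using negbin_gchoose[of \<alpha> n, where 'a=real] by (simp add: power_minus' algebra_simps)
  then show ?thesis using gen_binomial_real[of "-x" "-\<alpha>"] assms by simp
qed

lemma negbin_sums_complex:
  fixes z :: complex
  assumes "norm z < 1"
  shows "(\<lambda>n. of_real (negbin \<alpha> n) * z^n) sums (1 - z) powr (- of_real \<alpha>)"
proof -
  have "((- of_real \<alpha>) gchoose n) * (-z)^n = of_real (negbin \<alpha> n) * z^n" for n
    using negbin_gchoose[of \<alpha> n, where 'a=complex] by (simp add: power_minus' algebra_simps)
  then show ?thesis using gen_binomial_complex[of "-z" "- of_real \<alpha>"] assms by simp
qed

lemma has_integral_sums_nonneg:
  fixes f :: "nat \<Rightarrow> real \<Rightarrow> real"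
  assumes int_f: "\<And>n. (f n has_integral I n) S"
    and nonneg: "\<And>n x. x \<in> S \<Longrightarrow> 0 \<le> f n x"
    and sums_g: "\<And>x. x \<in> S \<Longrightarrow> (\<lambda>n. f n x) sums g x"
    and int_g: "(g has_integral J) S"
  shows "I sums J"
proof -
  define F where "F k x = (\<Sum>n<k. f n x)" for k x
  have int_F: "(F k has_integral (\<Sum>n<k. I n)) S" for k
    unfolding F_def by (intro has_integral_sum int_f finite_lessThan)
  have F_le_g: "F k x \<le> g x" if "x \<in> S" for k x
    unfolding F_def using sums_g[OF that] nonneg[OF that]
    by (metis finite_lessThan sums_iff sum_le_suminf)
  have I_nonneg: "0 \<le> I n" for n
    using int_f[of n] nonneg by (rule has_integral_nonneg)
  have "bounded (range (\<lambda>k. integral S (F k)))"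
  proof -
    have "\<bar>integral S (F k)\<bar> \<le> J" for k
    proof -
      have "(\<Sum>n<k. I n) \<le> J"
        using int_F[of k] int_g F_le_g by (rule has_integral_le)
      then show ?thesis
        using integral_unique[OF int_F[of k]] I_nonneg by (simp add: sum_nonneg)
    qed
    then show ?thesis by (auto simp: bounded_iff)
  qed
  moreover have "F k x \<le> F (Suc k) x" if "x \<in> S" for k x
    using nonneg[OF that] by (simp add: F_def)
  moreover have "(\<lambda>k. F k x) \<longlonglongrightarrow> g x" if "x \<in> S" for x
    using sums_g[OF that] by (simp add: F_def sums_def)
  moreover have "F k integrable_on S" for k
    using int_F by (rule has_integral_integrable)
  ultimately have "(\<lambda>k. integral S (F k)) \<longlonglongrightarrow> integral S g"
    using monotone_convergence_increasing by blast
  then show ?thesis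
    unfolding sums_def integral_unique[OF int_F] integral_unique[OF int_g] .
qed

lemma uniform_limit_has_integral_sums:
  fixes f :: "nat \<Rightarrow> real \<Rightarrow> 'a::banach"
  assumes "uniform_limit {a..b} (\<lambda>N x. \<Sum>n<N. f n x) g sequentially"
    and "\<And>n. continuous_on {a..b} (f n)"
    and "\<And>n. (f n has_integral I n) {a..b}"
  obtains J where "I sums J" "(g has_integral J) {a..b}"
proof -
  obtain K J where K: "\<And>N. ((\<lambda>x. \<Sum>n<N. f n x) has_integral K N) {a..b}"
    and J: "(g has_integral J) {a..b}" and KJ: "K \<longlonglongrightarrow> J"
    by (rule uniform_limit_integral[OF assms(1)]) (auto intro!: continuous_on_sum assms(2))
  have "K N = (\<Sum>n<N. I n)" for N
    using has_integral_unique[OF K[of N] has_integral_sum[OF finite_lessThan assms(3)]] .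
  then have "I sums J"
    using KJ unfolding sums_def by presburger
  then show ?thesis using J that by blast
qed

lemma has_integral_power_from_0:
  assumes "0 \<le> \<rho>"
  shows "((\<lambda>s::real. s^k) has_integral (\<rho>^Suc k / Suc k)) {0..\<rho>}"
proof -
  have "((\<lambda>s::real. s^k) has_integral (\<rho>^Suc k / Suc k - 0^Suc k / Suc k)) {0..\<rho>}"
  proof (rule fundamental_theorem_of_calculus[OF assms])
    fix x :: real
    have "((\<lambda>s. s^Suc k / Suc k) has_real_derivative (1 + real k) * (1 * x^k) / Suc k) (at x within {0..\<rho>})"
      by (intro DERIV_cdivide DERIV_power_Suc DERIV_ident)
    then show "((\<lambda>s. s^Suc k / Suc k) has_vector_derivative x^k) (at x within {0..\<rho>})"
      by (simp add: has_real_derivative_iff_has_vector_derivative)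
  qed
  then show ?thesis by simp
qed

text \<open>Expanding \<open>(1 - u)\<^sup>-\<^sup>\<alpha>\<close> in the Euler integral
  \<open>B(\<beta>, 1 - \<alpha>) = \<integral>\<^sub>0\<^sup>1 u\<^sup>\<beta>\<^sup>-\<^sup>1 (1 -
  u)\<^sup>-\<^sup>\<alpha> du\<close> gives a series for the Beta function.\<close>
lemma negbin_Beta_sums:
  fixes \<alpha> \<beta> :: real
  assumes "0 < \<alpha>" "\<alpha> < 1" "0 < \<beta>"
  shows "(\<lambda>n. negbin \<alpha> n / (real n + \<beta>)) sums Beta \<beta> (1 - \<alpha>)"
proof (rule has_integral_sums_nonneg)
  fix n
  have "((\<lambda>u. u powr (real n + \<beta> - 1)) has_integral
          (1 powr (real n + \<beta> - 1 + 1) / (real n + \<beta> - 1 + 1))) {0..1::real}"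
    by (rule has_integral_powr_from_0) (use assms in auto)
  then have "((\<lambda>u. u powr (real n + \<beta> - 1)) has_integral 1 / (real n + \<beta>)) {0<..<1::real}"
    by (simp add: has_integral_Icc_iff_Ioo)
  from has_integral_mult_right[OF this, of "negbin \<alpha> n"]
  show "((\<lambda>u. negbin \<alpha> n * u powr (real n + \<beta> - 1)) has_integral negbin \<alpha> n / (real n + \<beta>)) {0<..<1}"
    by simp
next
  have "((\<lambda>u. u powr (\<beta> - 1) * (1 - u) powr (1 - \<alpha> - 1)) has_integral Beta \<beta> (1 - \<alpha>)) {0<..<1::real}"
    using has_integral_Beta_real[of \<beta> "1 - \<alpha>"] assms by (simp add: has_integral_Icc_iff_Ioo)
  then show "((\<lambda>u. u powr (\<beta> - 1) * (1 - u) powr (-\<alpha>)) has_integral Beta \<beta> (1 - \<alpha>)) {0<..<1::real}"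
    by simp
next
  fix u :: real assume u: "u \<in> {0<..<1}"
  then show "0 \<le> negbin \<alpha> n * u powr (real n + \<beta> - 1)" for n
    using negbin_nonneg[OF assms(1)] by simp
  have term_eq: "negbin \<alpha> n * u powr (real n + \<beta> - 1) = u powr (\<beta> - 1) * (negbin \<alpha> n * u^n)" for n
  proof -
    have "u powr (real n + \<beta> - 1) = u powr (real n + (\<beta> - 1))"
      by (simp add: add_diff_eq)
    also have "\<dots> = u powr real n * u powr (\<beta> - 1)"
      by (rule powr_add)
    finally
    show ?thesis using u by (simp add: powr_realpow)
  qed
  have "(\<lambda>n. u powr (\<beta> - 1) * (negbin \<alpha> n * u^n)) sums (u powr (\<beta> - 1) * (1 - u) powr (-\<alpha>))"
    using u by (intro sums_mult negbin_sums_real) simp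
  then show "(\<lambda>n. negbin \<alpha> n * u powr (real n + \<beta> - 1)) sums (u powr (\<beta> - 1) * (1 - u) powr (-\<alpha>))"
    by (simp only: term_eq)
qed

text \<open>\<open>sc_coeff n = a\<^sub>n\<close> are the Taylor coefficients of the
  Schwarz-Christoffel series and \<open>sc_sum = \<kappa>\<close> is their sum.\<close>

definition sc_coeff :: "nat \<Rightarrow> real" where
  "sc_coeff n = negbin (2/3) n / (3 * real n + 1)"

definition sc_sum :: real where
  "sc_sum = Beta (1/3) (1/3) / 3"

lemma sc_coeff_nonneg: "0 \<le> sc_coeff n"
  unfolding sc_coeff_def by (simp add: negbin_nonneg)

lemma sc_coeff_sums: "sc_coeff sums sc_sum"
proof -
  have "(\<lambda>n. negbin (2/3) n / (real n + 1/3) / 3) sums (Beta (1/3) (1 - 2/3) / 3)"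
    by (intro sums_divide negbin_Beta_sums) auto
  moreover have "negbin (2/3) n / (real n + 1/3) / 3 = sc_coeff n" for n
    by (simp add: sc_coeff_def field_simps)
  ultimately show ?thesis by (simp add: sc_sum_def)
qed

lemma sc_coeff_summable: "summable sc_coeff"
  using sc_coeff_sums by (rule sums_summable)

lemma sc_sum_pos: "0 < sc_sum"
proof -
  have "sc_coeff 0 \<le> suminf sc_coeff"
    using sc_coeff_summable sc_coeff_nonneg by (intro sum_le_suminf[where I="{0}", simplified]) auto
  then show ?thesis
    using sc_coeff_sums by (simp add: sums_iff sc_coeff_def negbin_def)
qed

lemma pochhammer_shift_one:
  "pochhammer (a + 1) n * a = pochhammer a n * (a + of_nat n)"
  using pochhammer_rec[of a n] pochhammer_Suc[of a n] by (simp add: mult.commute)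

text \<open>Since \<open>(4/3)\<^sub>n = (1/3)\<^sub>n (3n+1)\<close> and \<open>(1)\<^sub>n =
  n!\<close>, the hypergeometric term is \<open>a\<^sub>n\<^sup>2\<close>.\<close>
lemma hyp4F3_term_eq_sq:
  "hyp4F3_term (1/3) (1/3) (2/3) (2/3) (4/3) (4/3) 1 1 n = (sc_coeff n)^2"
proof -
  have four_thirds: "pochhammer (4/3) n = pochhammer (1/3) n * (3 * real n + 1)"
    using pochhammer_shift_one[of "1/3::real" n] by (simp add: field_simps)
  have cancel: "P * P * Q * Q / (P * k * (P * k) * F) * 1 / F = (Q / F / k)^2"
    if "P \<noteq> 0" "k \<noteq> 0" "F \<noteq> 0" for P Q k F :: real
    using that by (simp add: field_simps power2_eq_square)
  show ?thesis
    unfolding hyp4F3_term_def four_thirds sc_coeff_def negbin_def pochhammer_fact[symmetric] power_one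
    by (rule cancel) (auto simp: pochhammer_eq_0_iff)
qed

context
  fixes c :: "nat \<Rightarrow> real"
  assumes c_nonneg: "\<And>n. 0 \<le> c n" and c_summable: "summable c"
begin

lemma powser_term_norm_le: "norm (q::complex) \<le> 1 \<Longrightarrow> norm (of_real (c n) * q^n) \<le> c n"
  using c_nonneg[of n] by (simp add: norm_mult norm_power mult_left_le power_le_one)

lemma powser_summable_disk: "norm (q::complex) \<le> 1 \<Longrightarrow> summable (\<lambda>n. of_real (c n) * q^n)"
  by (rule summable_comparison_test[OF _ c_summable]) (use powser_term_norm_le in auto)

lemma powser_partial_norm_le:
  assumes "norm (q::complex) \<le> 1"
  shows "norm (\<Sum>n<N. of_real (c n) * q^n) \<le> suminf c"
proof -
  have "norm (\<Sum>n<N. of_real (c n) * q^n) \<le> (\<Sum>n<N. c n)"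
    by (rule order_trans[OF norm_sum sum_mono]) (rule powser_term_norm_le[OF assms])
  also have "\<dots> \<le> suminf c"
    using c_summable c_nonneg by (intro sum_le_suminf) auto
  finally show ?thesis .
qed

lemma powser_tail_norm_le:
  assumes "norm (q::complex) \<le> 1"
  shows "norm ((\<Sum>n. of_real (c n) * q^n) - (\<Sum>n<N. of_real (c n) * q^n)) \<le> suminf c - (\<Sum>n<N. c n)"
proof -
  have "(\<Sum>n. of_real (c n) * q^n) - (\<Sum>n<N. of_real (c n) * q^n) = (\<Sum>n. of_real (c (n+N)) * q^(n+N))"
    using suminf_split_initial_segment[OF powser_summable_disk[OF assms], of N] by simp
  also have "norm \<dots> \<le> (\<Sum>n. c (n+N))"
    by (rule norm_suminf_le) (use powser_term_norm_le assms c_summable in \<open>auto simp: summable_iff_shift\<close>)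
  also have "\<dots> = suminf c - (\<Sum>n<N. c n)"
    using suminf_split_initial_segment[OF c_summable, of N] by simp
  finally show ?thesis .
qed

lemma powser_norm_le: "norm (q::complex) \<le> 1 \<Longrightarrow> norm (\<Sum>n. of_real (c n) * q^n) \<le> suminf c"
  using powser_tail_norm_le[of q 0] by simp

lemma powser_continuous_on_disk:
  "continuous_on (cball 0 1) (\<lambda>q::complex. \<Sum>n. of_real (c n) * q^n)"
proof -
  have "uniform_limit (cball 0 1) (\<lambda>N (q::complex). \<Sum>n<N. of_real (c n) * q^n)
          (\<lambda>q. \<Sum>n. of_real (c n) * q^n) sequentially"
    by (rule Weierstrass_m_test[OF _ c_summable]) (auto intro: powser_term_norm_le)
  then show ?thesis
    by (rule uniform_limit_theorem[rotated]) (auto intro!: always_eventually continuous_intros)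
qed

end

section \<open>Averages over roots of unity\<close>

definition unit_root :: "nat \<Rightarrow> nat \<Rightarrow> complex" where
  "unit_root M j = cis (2 * pi * real j / real M)"

lemma norm_unit_root [simp]: "norm (unit_root M j) = 1"
  by (simp add: unit_root_def)

lemma sum_cis_multiples:
  fixes k :: int
  assumes "\<bar>k\<bar> < int M"
  shows "(\<Sum>j<M. cis (2 * pi * real j * of_int k / M)) = (if k = 0 then of_nat M else 0)"
proof (cases "k = 0")
  case False
  define w where "w = cis (2 * pi * of_int k / M)"
  have M: "M > 0" using assms by simp
  have powers: "cis (2 * pi * real j * of_int k / M) = w ^ j" for j
  proof -
    have "w ^ j = cis (real j * (2 * pi * of_int k / M))"
      by (simp only: w_def Complex.DeMoivre)
    then show ?thesis by (simp add: mult_ac)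
  qed
  have "w \<noteq> 1"
  proof
    assume "w = 1"
    then have "cos (2 * pi * of_int k / M) = 1"
      unfolding w_def by (metis cis.sel(1) one_complex.sel(1))
    then obtain n :: int where "2 * pi * of_int k / M = of_int n * 2 * pi"
      using cos_one_2pi_int by blast
    then have "of_int k = (of_int (n * int M) :: real)"
      using M by (simp add: field_simps)
    then have "k = n * int M" by (simp only: of_int_eq_iff)
    with assms False show False by (cases "n = 0") (auto simp: abs_mult)
  qed
  moreover have "w ^ M = 1"
  proof -
    have "w ^ M = cis (2 * pi * of_int k)"
      using M by (simp add: w_def Complex.DeMoivre)
    also have "\<dots> = 1"
      by (rule cis_multiple_2pi) simp
    finally show ?thesis .
  qed
  ultimately show ?thesis
    using False unfolding powers by (simp add: geometric_sum)
qed simp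

lemma sum_unit_root_orthogonal:
  assumes "m < M" "n < M"
  shows "(\<Sum>j<M. unit_root M j ^ m * cnj (unit_root M j) ^ n) = (if m = n then of_nat M else 0)"
proof -
  have "unit_root M j ^ m * cnj (unit_root M j) ^ n = cis (2 * pi * real j * of_int (int m - int n) / M)" for j
  proof -
    have "unit_root M j ^ m * cnj (unit_root M j) ^ n
        = cis (real m * (2 * pi * real j / M) + real n * (- (2 * pi * real j / M)))"
      by (simp only: unit_root_def cis_cnj Complex.DeMoivre cis_mult)
    then show ?thesis by (simp add: algebra_simps diff_divide_distrib)
  qed
  then show ?thesis
    using sum_cis_multiples[of "int m - int n" M] assms by auto
qed

lemma norm_poly_squared:
  fixes c :: "nat \<Rightarrow> real" and q :: complex
  shows "of_real ((norm (\<Sum>n<N. of_real (c n) * q^n))^2)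
       = (\<Sum>m<N. \<Sum>n<N. of_real (c m * c n) * (q^m * cnj q^n))"
proof -
  have "of_real ((norm (\<Sum>n<N. of_real (c n) * q^n))^2)
      = (\<Sum>n<N. of_real (c n) * q^n) * cnj (\<Sum>n<N. of_real (c n) * q^n)"
    by (rule complex_norm_square)
  also have "\<dots> = (\<Sum>m<N. \<Sum>n<N. (of_real (c m) * q^m) * (of_real (c n) * cnj q^n))"
    by (simp add: sum_product)
  also have "\<dots> = (\<Sum>m<N. \<Sum>n<N. of_real (c m * c n) * (q^m * cnj q^n))"
    by (simp add: mult_ac)
  finally show ?thesis .
qed

lemma unit_root_parseval:
  fixes c :: "nat \<Rightarrow> real"
  assumes "N \<le> M"
  shows "(\<Sum>j<M. (norm (\<Sum>n<N. of_real (c n) * unit_root M j ^ n))^2) = real M * (\<Sum>n<N. (c n)^2)"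
proof -
  have "of_real (\<Sum>j<M. (norm (\<Sum>n<N. of_real (c n) * unit_root M j ^ n))^2)
      = (\<Sum>j<M. \<Sum>m<N. \<Sum>n<N. of_real (c m * c n) * (unit_root M j ^ m * cnj (unit_root M j) ^ n))"
    by (simp only: of_real_sum norm_poly_squared)
  also have "\<dots> = (\<Sum>m<N. \<Sum>n<N. of_real (c m * c n) * (\<Sum>j<M. unit_root M j ^ m * cnj (unit_root M j) ^ n))"
    by (simp add: sum_distrib_left sum.swap[of _ "{..<M}"])
  also have "\<dots> = (\<Sum>m<N. \<Sum>n<N. if m = n then of_real (c m * c m) * of_nat M else 0)"
    using assms by (intro sum.cong refl) (simp add: sum_unit_root_orthogonal)
  also have "\<dots> = of_real (real M * (\<Sum>n<N. (c n)^2))"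
    by (simp add: sum.delta sum_distrib_left power2_eq_square mult_ac)
  finally show ?thesis by (simp only: of_real_eq_iff)
qed

lemma unit_root_cube_mean:
  fixes c :: "nat \<Rightarrow> real"
  assumes "3 * N \<le> M"
  shows "(\<Sum>j<M. unit_root M j * (\<Sum>n<N. of_real (c n) * unit_root M j ^ n)^3) = 0"
proof -
  have cube: "q * (\<Sum>n<N. of_real (c n) * q^n)^3
      = (\<Sum>l<N. \<Sum>m<N. \<Sum>n<N. of_real (c l * c m * c n) * q^(l+m+n+1))" for q :: complex
    by (simp add: power3_eq_cube sum_product sum_distrib_left power_add mult_ac)
  have "(\<Sum>j<M. unit_root M j * (\<Sum>n<N. of_real (c n) * unit_root M j ^ n)^3)
      = (\<Sum>l<N. \<Sum>m<N. \<Sum>n<N. of_real (c l * c m * c n) * (\<Sum>j<M. unit_root M j ^ (l+m+n+1)))"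
    unfolding cube by (simp add: sum_distrib_left sum.swap[of _ "{..<M}"])
  also have "\<dots> = 0"
  proof (intro sum.neutral ballI)
    fix l m n assume "l \<in> {..<N}" "m \<in> {..<N}" "n \<in> {..<N}"
    then have "(\<Sum>j<M. unit_root M j ^ (l+m+n+1)) = 0"
      using sum_unit_root_orthogonal[of "l+m+n+1" M 0] assms by simp
    then show "of_real (c l * c m * c n) * (\<Sum>j<M. unit_root M j ^ (l+m+n+1)) = 0"
      by (simp only: mult_zero_right)
  qed
  finally show ?thesis .
qed

section \<open>Integral representation of the Schwarz-Christoffel series\<close>

text \<open>\<open>sc_series = P\<close>.\<close>
definition sc_series :: "complex \<Rightarrow> complex" where
  "sc_series q = (\<Sum>n. of_real (sc_coeff n) * q^n)"

lemma norm_mult_cube_le: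
  fixes q :: complex
  assumes "norm q \<le> 1" "0 \<le> s" "s \<le> \<rho>"
  shows "norm (q * of_real (s^3)) \<le> \<rho>^3"
proof -
  have "norm (q * of_real (s^3)) = norm q * s^3"
    using assms by (simp add: norm_mult norm_power)
  also have "\<dots> \<le> 1 * \<rho>^3"
    using assms by (intro mult_mono power_mono) auto
  finally show ?thesis by simp
qed

lemma binomial_cube_uniform:
  fixes q :: complex
  assumes q: "norm q \<le> 1" and \<rho>: "0 \<le> \<rho>" "\<rho> < 1"
  defines "f \<equiv> \<lambda>n s. of_real (negbin (2/3) n) * (q * of_real (s^3))^n"
  shows "uniform_limit {0..\<rho>} (\<lambda>N s. \<Sum>n<N. f n s) (\<lambda>s. \<Sum>n. f n s) sequentially"
proof (rule Weierstrass_m_test)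
  show "summable (\<lambda>n. (\<rho>^3)^n)"
    using \<rho> by (intro summable_geometric) (simp add: power_less_one_iff)
  fix n s assume s: "s \<in> {0..\<rho>}"
  have "norm (f n s) = negbin (2/3) n * norm (q * of_real (s^3)) ^ n"
    by (simp add: f_def norm_mult norm_power negbin_nonneg)
  also have "\<dots> \<le> 1 * (\<rho>^3)^n"
    using norm_mult_cube_le[OF q] s by (intro mult_mono power_mono negbin_le_one) auto
  finally show "norm (f n s) \<le> (\<rho>^3)^n" by simp
qed

lemma sc_series_integral:
  fixes q :: complex and \<rho> :: real
  assumes q: "norm q \<le> 1" and \<rho>: "0 \<le> \<rho>" "\<rho> < 1"
  shows "((\<lambda>s. (1 - q * of_real (s^3)) powr (-2/3)) has_integral of_real \<rho> * sc_series (q * of_real (\<rho>^3))) {0..\<rho>}"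
proof -
  define f where "f n s = of_real (negbin (2/3) n) * (q * of_real (s^3))^n" for n s
  have \<rho>3: "\<rho>^3 < 1" using \<rho> by (simp add: power_less_one_iff)
  have small: "norm (q * of_real (s^3)) \<le> \<rho>^3" if "s \<in> {0..\<rho>}" for s
    using norm_mult_cube_le[OF q] that by simp
  have sums_f: "(\<lambda>n. f n s) sums (1 - q * of_real (s^3)) powr (-2/3)" if "s \<in> {0..\<rho>}" for s
    using negbin_sums_complex[of "q * of_real (s^3)" "2/3"] small[OF that] \<rho>3 by (simp add: f_def)
  have ul: "uniform_limit {0..\<rho>} (\<lambda>N s. \<Sum>n<N. f n s) (\<lambda>s. \<Sum>n. f n s) sequentially"
    unfolding f_def by (rule binomial_cube_uniform[OF q \<rho>])
  have int_f: "(f n has_integral of_real (sc_coeff n) * q^n * of_real (\<rho>^(3*n+1))) {0..\<rho>}" for n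
  proof -
    have "((\<lambda>s. of_real (negbin (2/3) n) * q^n * of_real (s^(3*n))) has_integral
           of_real (negbin (2/3) n) * q^n * of_real (\<rho>^Suc (3*n) / Suc (3*n))) {0..\<rho>}"
      by (intro has_integral_mult_right has_integral_of_real has_integral_power_from_0 \<rho>)
    moreover have "f n = (\<lambda>s. of_real (negbin (2/3) n) * q^n * of_real (s^(3*n)))"
      by (simp add: fun_eq_iff f_def power_mult_distrib mult.commute flip: power_mult)
    ultimately show ?thesis
      by (simp add: sc_coeff_def add.commute mult_ac)
  qed
  obtain J where J: "(\<lambda>n. of_real (sc_coeff n) * q^n * of_real (\<rho>^(3*n+1))) sums J"
    and int_J: "((\<lambda>s. \<Sum>n. f n s) has_integral J) {0..\<rho>}"
    by (rule uniform_limit_has_integral_sums[OF ul _ int_f]) (auto simp: f_def intro!: continuous_intros)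
  have "norm (q * of_real (\<rho>^3)) \<le> 1"
    using small[of \<rho>] \<rho> \<rho>3 by simp
  then have "(\<lambda>n. of_real (sc_coeff n) * (q * of_real (\<rho>^3))^n) sums sc_series (q * of_real (\<rho>^3))"
    unfolding sc_series_def by (intro summable_sums powser_summable_disk sc_coeff_nonneg sc_coeff_summable)
  moreover have "(x^n)^3 = (x^3)^n" for x :: complex and n
    by (metis power_mult mult.commute)
  ultimately
  have "(\<lambda>n. of_real (sc_coeff n) * q^n * of_real (\<rho>^(3*n+1))) sums (of_real \<rho> * sc_series (q * of_real (\<rho>^3)))"
    using sums_mult[of _ _ "of_real \<rho>"] by (simp add: power_mult_distrib power_mult mult_ac)
  with J have "J = of_real \<rho> * sc_series (q * of_real (\<rho>^3))"
    using sums_unique2 by blast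
  moreover have "(\<Sum>n. f n s) = (1 - q * of_real (s^3)) powr (-2/3)" if "s \<in> {0..\<rho>}" for s
    using sums_f[OF that] by (simp add: sums_iff)
  ultimately show ?thesis
    using has_integral_eq[OF _ int_J] by simp
qed

lemma Re_one_minus_cube_pos:
  fixes q :: complex
  assumes "Re q < 1" "0 \<le> s" "s \<le> 1"
  shows "0 < Re (1 - q * of_real (s^3))"
proof -
  have s3: "0 \<le> s^3" "s^3 \<le> 1" using assms by (auto simp: power_le_one)
  have "Re q * s^3 < 1"
  proof (cases "Re q \<ge> 0")
    case True
    then have "Re q * s^3 \<le> Re q * 1" using s3 by (intro mult_left_mono) auto
    then show ?thesis using assms(1) by simp
  next
    case False
    then show ?thesis using s3 by (smt (verit) mult_nonpos_nonneg)
  qed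
  then show ?thesis by simp
qed

lemma continuous_on_powr_Re_pos:
  fixes f :: "'a::topological_space \<Rightarrow> complex"
  assumes "continuous_on A f" "\<And>z. z \<in> A \<Longrightarrow> 0 < Re (f z)"
  shows "continuous_on A (\<lambda>z. f z powr a)"
proof (rule continuous_on_powr_complex)
  show "A \<subseteq> {z. 0 \<le> Re (f z) \<or> Im (f z) \<noteq> 0}"
    using assms(2) by (auto intro: less_imp_le)
  show "\<And>z. z \<in> A \<Longrightarrow> f z = 0 \<Longrightarrow> 0 < Re a"
    using assms(2) by fastforce
qed (use assms(1) in auto)

text \<open>By continuity in \<open>\<rho>\<close> the representation extends to \<open>\<rho> =
  1\<close> whenever the integrand stays in the right half plane.\<close>
lemma sc_series_integral_unit:
  fixes q :: complex
  assumes q: "norm q \<le> 1" "Re q < 1"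
  shows "((\<lambda>s. (1 - q * of_real (s^3)) powr (-2/3)) has_integral sc_series q) {0..1}"
proof -
  let ?f = "\<lambda>s. (1 - q * of_real (s^3)) powr (-2/3)"
  have pos: "0 < Re (1 - q * of_real (s^3))" if "s \<in> {0..1}" for s
    using Re_one_minus_cube_pos[OF q(2)] that by simp
  have "continuous_on {0..1} ?f"
    by (intro continuous_on_powr_Re_pos pos continuous_intros)
  then have int_f: "?f integrable_on {0..1}"
    by (rule integrable_continuous_interval)
  define H where "H \<rho> = integral {0..\<rho>} ?f - of_real \<rho> * sc_series (q * of_real (\<rho>^3))" for \<rho>
  have "continuous_on (cball 0 1) sc_series"
    unfolding sc_series_def[abs_def] by (intro powser_continuous_on_disk sc_coeff_nonneg sc_coeff_summable)
  then have "continuous_on {0..1} (\<lambda>\<rho>. sc_series (q * of_real (\<rho>^3)))"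
    by (rule continuous_on_compose2) (use q in \<open>auto intro!: continuous_intros mult_le_one power_le_one simp: norm_mult norm_power\<close>)
  then have "continuous_on {0..1} H"
    unfolding H_def by (intro continuous_intros indefinite_integral_continuous_1 int_f)
  then have "(H \<longlongrightarrow> H 1) (at 1 within {0..1})"
    by (simp add: continuous_on_def)
  then have "(H \<longlongrightarrow> H 1) (at_left 1)"
    by (simp add: at_within_Icc_at_left)
  moreover have "eventually (\<lambda>\<rho>. H \<rho> = 0) (at_left (1::real))"
  proof -
    have "eventually (\<lambda>\<rho>. \<rho> \<in> {0<..<1}) (at_left (1::real))"
      by (rule eventually_at_left_real) simp
    then show ?thesis
      by eventually_elim (use sc_series_integral[OF q(1)] in \<open>auto simp: H_def integral_unique\<close>)
  qed
  then have "(H \<longlongrightarrow> 0) (at_left 1)" by (rule tendsto_eventually)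
  ultimately have "H 1 = 0" by (rule tendsto_unique[rotated 1]) simp
  then show ?thesis
    using int_f by (simp add: H_def has_integral_integral)
qed

section \<open>The boundary curve runs along a side of the triangle\<close>

text \<open>\<open>boundary_curve \<theta> = F(\<theta>)\<close> traces the image of the unit
  circle; for \<open>0 < \<theta> < 2\<pi>/3\<close> it equals \<open>\<integral>\<^sub>0\<^sup>1
  e\<^sup>i\<^sup>\<theta> (ray_base \<theta> s)\<^sup>-\<^sup>2\<^sup>/\<^sup>3 ds\<close>.\<close>

definition ray_base :: "real \<Rightarrow> real \<Rightarrow> complex" where
  "ray_base \<theta> s = 1 - cis (3 * \<theta>) * of_real (s^3)"

definition boundary_curve :: "real \<Rightarrow> complex" where
  "boundary_curve \<theta> = cis \<theta> * sc_series (cis (3 * \<theta>))"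

lemma cos_lt_one: "0 < x \<Longrightarrow> x < 2 * pi \<Longrightarrow> cos x < 1"
  using cos_double_sin[of "x/2"] sin_gt_zero[of "x/2"] by simp

lemma ray_base_Re_pos:
  assumes "0 < \<theta>" "\<theta> < 2 * pi / 3" "0 \<le> s" "s \<le> 1"
  shows "0 < Re (ray_base \<theta> s)"
  unfolding ray_base_def using assms cos_lt_one[of "3 * \<theta>"]
  by (intro Re_one_minus_cube_pos) auto

lemma boundary_curve_integral:
  assumes "0 < \<theta>" "\<theta> < 2 * pi / 3"
  shows "((\<lambda>s. cis \<theta> * ray_base \<theta> s powr (-2/3)) has_integral boundary_curve \<theta>) {0..1}"
  unfolding ray_base_def boundary_curve_def using assms cos_lt_one[of "3 * \<theta>"]
  by (intro has_integral_mult_right sc_series_integral_unit) auto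

text \<open>\<open>ray_dtheta\<close> is the \<open>\<theta>\<close>-derivative of the integrand; it
  is also the \<open>s\<close>-derivative of \<open>i e\<^sup>i\<^sup>\<theta> s (ray_base \<theta>
  s)\<^sup>-\<^sup>2\<^sup>/\<^sup>3\<close>, which makes the differentiated integral
  explicit.\<close>
definition ray_dtheta :: "real \<Rightarrow> real \<Rightarrow> complex" where
  "ray_dtheta \<theta> s = \<i> * cis \<theta> *
     (ray_base \<theta> s powr (-2/3) + 2 * cis (3 * \<theta>) * of_real (s^3) * ray_base \<theta> s powr (-5/3))"

lemma ray_integrand_dtheta:
  assumes "0 < Re (ray_base \<theta> s)"
  shows "((\<lambda>x. cis x * ray_base x s powr (-2/3)) has_vector_derivative ray_dtheta \<theta> s) (at \<theta> within U)"
proof -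
  define c where "c = (of_real (s^3) :: complex)"
  define g where "g z = exp (\<i> * z) * (1 - exp (\<i> * (3 * z)) * c) powr (-2/3)" for z
  have g_real: "g (of_real x) = cis x * ray_base x s powr (-2/3)" for x
    by (simp add: g_def ray_base_def c_def cis_conv_exp)
  have base: "1 - exp (\<i> * (3 * of_real \<theta>)) * c = ray_base \<theta> s"
    by (simp add: ray_base_def c_def cis_conv_exp)
  have "(g has_field_derivative ray_dtheta \<theta> s) (at (of_real \<theta>))"
  proof -
    have "1 - exp (\<i> * (3 * of_real \<theta>)) * c \<notin> \<real>\<^sub>\<le>\<^sub>0"
      using assms unfolding base by (auto simp: complex_nonpos_Reals_iff)
    then have "(g has_field_derivative
        exp (\<i> * of_real \<theta>) * \<i> * ray_base \<theta> s powr (-2/3)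
        + (-2/3) * ray_base \<theta> s powr (-2/3 - 1) * (-(exp (\<i> * (3 * of_real \<theta>)) * (\<i> * 3) * c))
          * exp (\<i> * of_real \<theta>)) (at (of_real \<theta>))"
      unfolding g_def base[symmetric]
      by (intro DERIV_mult DERIV_chain2[OF has_field_derivative_powr] derivative_eq_intros) auto
    moreover have "exp (\<i> * (3 * of_real \<theta>)) = cis (3 * \<theta>)" "exp (\<i> * of_real \<theta>) = cis \<theta>"
      by (simp_all add: cis_conv_exp)
    ultimately show ?thesis
      by (simp add: ray_dtheta_def c_def algebra_simps)
  qed
  then show ?thesis
    using has_vector_derivative_real_field[of g "ray_dtheta \<theta> s" \<theta> U] by (simp add: g_real)
qed

lemma ray_primitive_ds:
  assumes "0 < Re (ray_base \<theta> s)"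
  shows "((\<lambda>t. \<i> * cis \<theta> * of_real t * ray_base \<theta> t powr (-2/3)) has_vector_derivative ray_dtheta \<theta> s) (at s within U)"
proof -
  define q where "q = cis (3 * \<theta>)"
  define g where "g z = \<i> * cis \<theta> * z * (1 - q * z^3) powr (-2/3)" for z
  have g_real: "g (of_real t) = \<i> * cis \<theta> * of_real t * ray_base \<theta> t powr (-2/3)" for t
    by (simp add: g_def ray_base_def q_def)
  have base: "1 - q * (of_real s)^3 = ray_base \<theta> s"
    by (simp add: ray_base_def q_def)
  have "(g has_field_derivative ray_dtheta \<theta> s) (at (of_real s))"
  proof -
    have "1 - q * (of_real s)^3 \<notin> \<real>\<^sub>\<le>\<^sub>0"
      using assms unfolding base by (auto simp: complex_nonpos_Reals_iff)
    then have "(g has_field_derivative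
        \<i> * cis \<theta> * ray_base \<theta> s powr (-2/3)
        + (-2/3) * ray_base \<theta> s powr (-2/3 - 1) * (-(q * (3 * (of_real s)^2))) * (\<i> * cis \<theta> * of_real s))
        (at (of_real s))"
      unfolding g_def base[symmetric]
      by (intro DERIV_mult DERIV_chain2[OF has_field_derivative_powr] derivative_eq_intros)
        (auto simp: power2_eq_square)
    then show ?thesis
      by (simp add: ray_dtheta_def q_def algebra_simps power2_eq_square power3_eq_cube)
  qed
  then show ?thesis
    using has_vector_derivative_real_field[of g "ray_dtheta \<theta> s" s U] by (simp add: g_real)
qed

lemma ray_dtheta_integral:
  assumes "0 < \<theta>" "\<theta> < 2 * pi / 3"
  shows "(ray_dtheta \<theta> has_integral \<i> * cis \<theta> * (1 - cis (3 * \<theta>)) powr (-2/3)) {0..1}"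
proof -
  have "(ray_dtheta \<theta> has_integral
          (\<i> * cis \<theta> * of_real 1 * ray_base \<theta> 1 powr (-2/3) - \<i> * cis \<theta> * of_real 0 * ray_base \<theta> 0 powr (-2/3))) {0..1}"
  proof (rule fundamental_theorem_of_calculus)
    fix s :: real assume "s \<in> {0..1}"
    then show "((\<lambda>t. \<i> * cis \<theta> * of_real t * ray_base \<theta> t powr (-2/3)) has_vector_derivative ray_dtheta \<theta> s)
                (at s within {0..1})"
      by (intro ray_primitive_ds ray_base_Re_pos assms) auto
  qed simp
  then show ?thesis by (simp add: ray_base_def)
qed

lemma ray_dtheta_continuous:
  assumes U: "U \<subseteq> {0<..<2 * pi / 3}"
  shows "continuous_on (U \<times> {0..1}) (\<lambda>(x, t). ray_dtheta x t)"
proof -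
  have pos: "0 < Re (ray_base (fst p) (snd p))" if "p \<in> U \<times> {0..1}" for p
    using that U by (intro ray_base_Re_pos) auto
  have powr_cont: "continuous_on (U \<times> {0..1}) (\<lambda>p. ray_base (fst p) (snd p) powr a)" for a
    using pos by (intro continuous_on_powr_Re_pos) (auto simp: ray_base_def intro!: continuous_intros)
  have "continuous_on (U \<times> {0..1}) (\<lambda>p. ray_dtheta (fst p) (snd p))"
    unfolding ray_dtheta_def
    by (intro continuous_on_add continuous_on_mult continuous_on_const powr_cont continuous_intros)
  then show ?thesis by (simp add: case_prod_beta)
qed

lemma boundary_curve_deriv:
  assumes "0 < \<theta>" "\<theta> < 2 * pi / 3"
  shows "(boundary_curve has_vector_derivative \<i> * cis \<theta> * (1 - cis (3 * \<theta>)) powr (-2/3)) (at \<theta>)"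
proof -
  define \<delta> where "\<delta> = min \<theta> (2 * pi / 3 - \<theta>) / 2"
  define U where "U = {\<theta> - \<delta> .. \<theta> + \<delta>}"
  have "\<delta> > 0" using assms by (simp add: \<delta>_def)
  have "\<delta> \<le> \<theta> / 2" "\<delta> \<le> (2 * pi / 3 - \<theta>) / 2"
    by (auto simp: \<delta>_def)
  then have U: "U \<subseteq> {0<..<2 * pi / 3}"
    using assms unfolding U_def by (auto simp: subset_iff)
  have "((\<lambda>x. integral (cbox 0 1) (\<lambda>s. cis x * ray_base x s powr (-2/3)))
          has_vector_derivative integral (cbox 0 1) (ray_dtheta \<theta>)) (at \<theta> within U)"
  proof (rule leibniz_rule_vector_derivative)
    fix x t assume "x \<in> U" "t \<in> cbox (0::real) 1"
    then have "0 < Re (ray_base x t)"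
      using U by (intro ray_base_Re_pos) (auto simp: cbox_interval)
    then show "((\<lambda>x. cis x * ray_base x t powr (-2/3)) has_vector_derivative ray_dtheta x t) (at x within U)"
      by (rule ray_integrand_dtheta)
  next
    fix x assume "x \<in> U"
    then have "0 < x" "x < 2 * pi / 3" using U by auto
    from has_integral_integrable[OF boundary_curve_integral[OF this]]
    show "(\<lambda>s. cis x * ray_base x s powr (-2/3)) integrable_on cbox 0 1"
      by (simp only: cbox_interval)
  qed (use U \<open>\<delta> > 0\<close> in \<open>auto simp: U_def cbox_interval intro: ray_dtheta_continuous\<close>)
  moreover have "integral (cbox 0 1) (ray_dtheta \<theta>) = \<i> * cis \<theta> * (1 - cis (3 * \<theta>)) powr (-2/3)"
    unfolding cbox_interval by (rule integral_unique[OF ray_dtheta_integral[OF assms]])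
  moreover have "at \<theta> within U = at \<theta>"
    by (rule at_within_interior) (use \<open>\<delta> > 0\<close> in \<open>simp add: U_def\<close>)
  ultimately have "((\<lambda>x. integral (cbox 0 1) (\<lambda>s. cis x * ray_base x s powr (-2/3)))
          has_vector_derivative \<i> * cis \<theta> * (1 - cis (3 * \<theta>)) powr (-2/3)) (at \<theta>)"
    by simp
  then show ?thesis
  proof (rule has_vector_derivative_transform_within_open)
    fix y :: real assume "y \<in> {0<..<2 * pi / 3}"
    then show "integral (cbox 0 1) (\<lambda>s. cis y * ray_base y s powr (-2/3)) = boundary_curve y"
      unfolding cbox_interval by (intro integral_unique boundary_curve_integral) auto
  qed (use assms in auto)
qed

text \<open>The derivative is a positive multiple of
  \<open>e\<^sup>5\<^sup>\<pi>\<^sup>i\<^sup>/\<^sup>6\<close>, so it is parallel to the line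
  \<open>Re w + \<surd>3 Im w = const\<close>.\<close>
lemma boundary_deriv_direction:
  assumes "0 < \<theta>" "\<theta> < 2 * pi / 3"
  defines "D \<equiv> \<i> * cis \<theta> * (1 - cis (3 * \<theta>)) powr (-2/3)"
  shows "Re D + sqrt 3 * Im D = 0"
proof -
  define t where "t = 3 * \<theta> / 2"
  have t: "0 < t" "t < pi" using assms by (auto simp: t_def)
  define L where "L = ln (2 * sin t)"
  have eL: "exp L = 2 * sin t"
    using sin_gt_zero[OF t] by (simp add: L_def)
  have polar: "1 - cis (3 * \<theta>) = exp (Complex L (t - pi/2))"
  proof -
    have "exp (Complex L (t - pi/2)) = of_real (exp L) * cis (t - pi/2)"
      by (simp add: exp_eq_polar)
    also have "\<dots> = 1 - cis (2 * t)"
      unfolding eL by (simp add: complex_eq_iff sin_diff cos_diff cos_double_sin sin_double power2_eq_square)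
    finally show ?thesis by (simp add: t_def)
  qed
  have Ln: "Ln (1 - cis (3 * \<theta>)) = Complex L (t - pi/2)"
    by (rule Ln_unique[OF polar[symmetric]]) (use t in auto)
  have "(1 - cis (3 * \<theta>)) powr (-2/3) = exp ((-2/3) * Ln (1 - cis (3 * \<theta>)))"
    using polar by (simp add: powr_def)
  also have "(-2/3) * Ln (1 - cis (3 * \<theta>)) = Complex (-2/3 * L) (pi/3 - \<theta>)"
    unfolding Ln by (simp add: complex_eq_iff t_def field_simps)
  finally have "(1 - cis (3 * \<theta>)) powr (-2/3) = exp (Complex (-2/3 * L) (pi/3 - \<theta>))" .
  then have "D = of_real (exp (-2/3 * L)) * (\<i> * (cis \<theta> * cis (pi/3 - \<theta>)))"
    by (simp add: D_def exp_eq_polar mult_ac)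
  also have "cis \<theta> * cis (pi/3 - \<theta>) = cis (pi/3)"
    by (simp add: cis_mult)
  finally show ?thesis
    by (simp add: sin_60 cos_60 algebra_simps)
qed

lemma sc_series_one: "sc_series 1 = of_real sc_sum"
  using sums_of_real[OF sc_coeff_sums, where 'a=complex] by (simp add: sc_series_def sums_iff)

lemma boundary_curve_continuous: "continuous_on UNIV boundary_curve"
proof -
  have "continuous_on (cball 0 1) sc_series"
    unfolding sc_series_def[abs_def] by (intro powser_continuous_on_disk sc_coeff_nonneg sc_coeff_summable)
  then have "continuous_on UNIV (\<lambda>\<theta>. sc_series (cis (3 * \<theta>)))"
    by (rule continuous_on_compose2) (auto intro!: continuous_intros)
  then show ?thesis
    unfolding boundary_curve_def[abs_def] by (intro continuous_intros)
qed

lemma boundary_curve_on_line: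
  assumes "0 \<le> \<theta>" "\<theta> < 2 * pi / 3"
  shows "Re (boundary_curve \<theta>) + sqrt 3 * Im (boundary_curve \<theta>) = sc_sum"
proof -
  define h where "h x = Re (boundary_curve x) + sqrt 3 * Im (boundary_curve x)" for x
  have "h 0 = sc_sum" by (simp add: h_def boundary_curve_def sc_series_one)
  moreover have "h \<theta> = h 0" if "0 < \<theta>"
  proof (rule DERIV_isconst_end[OF that])
    show "continuous_on {0..\<theta>} h" unfolding h_def
      by (intro continuous_intros continuous_on_subset[OF boundary_curve_continuous]) auto
    fix x assume x: "0 < x" "x < \<theta>"
    define D where "D = \<i> * cis x * (1 - cis (3 * x)) powr (-2/3)"
    have d: "(boundary_curve has_vector_derivative D) (at x)"
      unfolding D_def using x assms by (intro boundary_curve_deriv) auto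
    have "(h has_field_derivative (Re D + sqrt 3 * Im D)) (at x)"
      unfolding h_def by (intro DERIV_add DERIV_cmult has_field_derivative_Re[OF d] has_field_derivative_Im[OF d])
    moreover have "Re D + sqrt 3 * Im D = 0"
      unfolding D_def using x assms by (intro boundary_deriv_direction) auto
    ultimately show "(h has_field_derivative 0) (at x)" by simp
  qed
  ultimately show ?thesis
    using assms(1) by (cases "\<theta> = 0") (auto simp: h_def)
qed

lemma norm_on_line:
  assumes "Re w + sqrt 3 * Im w = c" "c > 0"
  shows "(norm w)^2 = c^2/3 + 2/(3*c) * Re (w^3)"
proof -
  define x where "x = Re w"
  define y where "y = Im w"
  have "c = x + sqrt 3 * y" using assms by (simp add: x_def y_def)
  then have "3 * c * (x^2 + y^2) = c^3 + 2 * (x^3 - 3 * x * y^2)"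
    by (simp add: power2_eq_square power3_eq_cube algebra_simps)
  moreover have "(norm w)^2 = x^2 + y^2" by (simp add: cmod_power2 x_def y_def)
  moreover have "Re (w^3) = x^3 - 3 * x * y^2"
    by (simp add: x_def y_def power3_eq_cube power2_eq_square algebra_simps)
  ultimately show ?thesis
    using assms(2) by (simp add: field_simps power2_eq_square power3_eq_cube)
qed

lemma sc_series_boundary_identity:
  assumes "0 \<le> \<phi>" "\<phi> < 2 * pi"
  shows "(norm (sc_series (cis \<phi>)))^2 = sc_sum^2/3 + 2/(3 * sc_sum) * Re (cis \<phi> * sc_series (cis \<phi>)^3)"
proof -
  have "(norm (boundary_curve (\<phi>/3)))^2 = sc_sum^2/3 + 2/(3 * sc_sum) * Re (boundary_curve (\<phi>/3)^3)"
    using assms by (intro norm_on_line boundary_curve_on_line sc_sum_pos) auto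
  moreover have "norm (boundary_curve (\<phi>/3)) = norm (sc_series (cis \<phi>))"
    by (simp add: boundary_curve_def norm_mult)
  moreover have "boundary_curve (\<phi>/3)^3 = cis \<phi> * sc_series (cis \<phi>)^3"
    by (simp add: boundary_curve_def power_mult_distrib Complex.DeMoivre)
  ultimately show ?thesis by simp
qed

section \<open>Averaging and the main theorem\<close>

lemma norm_cube_diff_le:
  fixes p r :: complex
  assumes "norm p \<le> c" "norm r \<le> c"
  shows "norm (p^3 - r^3) \<le> 3 * c^2 * norm (p - r)"
proof -
  have "0 \<le> c"
    using assms(1) norm_ge_zero order_trans by blast
  have "norm (p^2 + p * r + r^2) \<le> norm (p^2) + norm (p * r) + norm (r^2)"
    by (rule order_trans[OF norm_triangle_ineq add_right_mono[OF norm_triangle_ineq]])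
  also have "\<dots> \<le> c^2 + c^2 + c^2"
    using assms \<open>0 \<le> c\<close> unfolding norm_mult norm_power power2_eq_square
    by (intro add_mono mult_mono) auto
  finally have bound: "norm (p^2 + p * r + r^2) \<le> 3 * c^2" by simp
  have "p^3 - r^3 = (p - r) * (p^2 + p * r + r^2)"
    by (simp add: power2_eq_square power3_eq_cube algebra_simps)
  then have "norm (p^3 - r^3) = norm (p - r) * norm (p^2 + p * r + r^2)"
    by (simp add: norm_mult)
  also have "\<dots> \<le> norm (p - r) * (3 * c^2)"
    by (rule mult_left_mono[OF bound]) simp
  finally show ?thesis by (simp add: mult_ac)
qed

text \<open>The defect of the boundary identity, for a general positive constant
  \<open>c\<close>.\<close>
definition cubic_defect :: "real \<Rightarrow> complex \<Rightarrow> complex \<Rightarrow> real" where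
  "cubic_defect c p q = (norm p)^2 - c^2/3 - 2/(3*c) * Re (q * p^3)"

lemma cubic_defect_lipschitz:
  assumes "0 < c" "norm p \<le> c" "norm r \<le> c" "norm q = 1"
  shows "\<bar>cubic_defect c p q - cubic_defect c r q\<bar> \<le> 4 * c * norm (p - r)"
proof -
  have sq: "\<bar>(norm p)^2 - (norm r)^2\<bar> \<le> 2 * c * norm (p - r)"
  proof -
    have "(norm p)^2 - (norm r)^2 = (norm p - norm r) * (norm p + norm r)"
      by (simp add: power2_eq_square algebra_simps)
    then have "\<bar>(norm p)^2 - (norm r)^2\<bar> = \<bar>norm p - norm r\<bar> * (norm p + norm r)"
      by (simp add: abs_mult)
    also have "\<dots> \<le> norm (p - r) * (2 * c)"
      using assms norm_triangle_ineq3[of p r] by (intro mult_mono) auto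
    finally show ?thesis by (simp add: mult_ac)
  qed
  have cube: "\<bar>Re (q * p^3) - Re (q * r^3)\<bar> \<le> 3 * c^2 * norm (p - r)"
  proof -
    have "\<bar>Re (q * p^3) - Re (q * r^3)\<bar> \<le> norm (q * (p^3 - r^3))"
      by (metis abs_Re_le_cmod minus_complex.sel(1) right_diff_distrib)
    also have "\<dots> = norm (p^3 - r^3)"
      using assms(4) by (simp add: norm_mult)
    also have "\<dots> \<le> 3 * c^2 * norm (p - r)"
      using assms(2,3) by (rule norm_cube_diff_le)
    finally show ?thesis .
  qed
  have "\<bar>cubic_defect c p q - cubic_defect c r q\<bar>
      \<le> \<bar>(norm p)^2 - (norm r)^2\<bar> + 2/(3*c) * \<bar>Re (q * p^3) - Re (q * r^3)\<bar>"
  proof -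
    have eq: "cubic_defect c p q - cubic_defect c r q
        = ((norm p)^2 - (norm r)^2) - 2/(3*c) * (Re (q * p^3) - Re (q * r^3))"
      by (simp add: cubic_defect_def algebra_simps)
    have tri: "\<bar>A - k * B\<bar> \<le> \<bar>A\<bar> + k * \<bar>B\<bar>" if "0 \<le> k" for A B k :: real
      using abs_triangle_ineq4[of A "k * B"] that by (simp add: abs_mult)
    show ?thesis
      unfolding eq by (rule tri) (use assms(1) in simp)
  qed
  also have "\<dots> \<le> 2 * c * norm (p - r) + 2/(3*c) * (3 * c^2 * norm (p - r))"
    using sq cube assms(1) by (intro add_mono mult_left_mono) auto
  also have "\<dots> = 4 * c * norm (p - r)"
    using assms(1) by (simp add: field_simps power2_eq_square)
  finally show ?thesis .
qed

lemma truncated_defect_mean: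
  fixes a :: "nat \<Rightarrow> real"
  assumes "3 * N \<le> M"
  shows "(\<Sum>j<M. cubic_defect c (\<Sum>n<N. of_real (a n) * unit_root M j ^ n) (unit_root M j))
       = real M * ((\<Sum>n<N. (a n)^2) - c^2/3)"
proof -
  let ?p = "\<lambda>j. \<Sum>n<N. of_real (a n) * unit_root M j ^ n"
  have "(\<Sum>j<M. cubic_defect c (?p j) (unit_root M j))
      = (\<Sum>j<M. (norm (?p j))^2) - real M * (c^2/3) - 2/(3*c) * Re (\<Sum>j<M. unit_root M j * ?p j ^ 3)"
    unfolding cubic_defect_def sum_subtractf sum_distrib_left[symmetric] Re_sum[symmetric] by simp
  also have "\<dots> = real M * ((\<Sum>n<N. (a n)^2) - c^2/3)"
    using unit_root_parseval[of N M a] unit_root_cube_mean[OF assms, of a] assms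
    by (simp add: algebra_simps)
  finally show ?thesis .
qed

lemma sc_series_defect_zero:
  assumes "j < M"
  shows "cubic_defect sc_sum (sc_series (unit_root M j)) (unit_root M j) = 0"
proof -
  have "2 * pi * real j / real M < 2 * pi"
    using assms by (simp add: field_simps)
  then show ?thesis
    unfolding cubic_defect_def unit_root_def by (simp add: sc_series_boundary_identity)
qed

text \<open>Comparing the defects of \<open>P\<close> (which vanish) and of its truncation
  \<open>P\<^sub>N\<close> at the \<open>3N\<close>-th roots of unity.\<close>
lemma sc_coeff_sq_partial_error:
  assumes "N > 0"
  shows "\<bar>(\<Sum>n<N. (sc_coeff n)^2) - sc_sum^2/3\<bar> \<le> 4 * sc_sum * (sc_sum - (\<Sum>n<N. sc_coeff n))"
proof -
  define M where "M = 3 * N"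
  let ?q = "unit_root M"
  let ?p = "\<lambda>j. \<Sum>n<N. of_real (sc_coeff n) * ?q j ^ n"
  have sc_sum: "suminf sc_coeff = sc_sum"
    using sc_coeff_sums by (simp add: sums_iff)
  have close: "\<bar>cubic_defect sc_sum (sc_series (?q j)) (?q j) - cubic_defect sc_sum (?p j) (?q j)\<bar>
      \<le> 4 * sc_sum * (sc_sum - (\<Sum>n<N. sc_coeff n))" for j
  proof -
    note bounds = powser_norm_le powser_partial_norm_le powser_tail_norm_le
    note bounds = bounds[OF sc_coeff_nonneg sc_coeff_summable, unfolded sc_sum, folded sc_series_def]
    have "\<bar>cubic_defect sc_sum (sc_series (?q j)) (?q j) - cubic_defect sc_sum (?p j) (?q j)\<bar>
        \<le> 4 * sc_sum * norm (sc_series (?q j) - ?p j)"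
      by (intro cubic_defect_lipschitz sc_sum_pos bounds) simp_all
    also have "\<dots> \<le> 4 * sc_sum * (sc_sum - (\<Sum>n<N. sc_coeff n))"
      using sc_sum_pos by (intro mult_left_mono bounds) simp_all
    finally show ?thesis .
  qed
  have "real M * \<bar>(\<Sum>n<N. (sc_coeff n)^2) - sc_sum^2/3\<bar>
      = \<bar>\<Sum>j<M. cubic_defect sc_sum (sc_series (?q j)) (?q j) - cubic_defect sc_sum (?p j) (?q j)\<bar>"
    using truncated_defect_mean[of N M sc_sum sc_coeff] sc_series_defect_zero
    by (simp add: M_def sum_subtractf sum_negf abs_mult)
  also have "\<dots> \<le> real M * (4 * sc_sum * (sc_sum - (\<Sum>n<N. sc_coeff n)))"
  proof -
    have "\<bar>\<Sum>j<M. cubic_defect sc_sum (sc_series (?q j)) (?q j) - cubic_defect sc_sum (?p j) (?q j)\<bar>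
        \<le> (\<Sum>j<M. 4 * sc_sum * (sc_sum - (\<Sum>n<N. sc_coeff n)))"
      by (rule order_trans[OF sum_abs sum_mono[OF close]])
    then show ?thesis by simp
  qed
  finally have "real M * \<bar>(\<Sum>n<N. (sc_coeff n)^2) - sc_sum^2/3\<bar>
      \<le> real M * (4 * sc_sum * (sc_sum - (\<Sum>n<N. sc_coeff n)))" .
  moreover have "0 < real M" using assms by (simp add: M_def)
  ultimately show ?thesis by (rule mult_le_cancel_left_pos[THEN iffD1, rotated])
qed

lemma sc_coeff_sq_sums: "(\<lambda>n. (sc_coeff n)^2) sums (sc_sum^2/3)"
proof -
  have "(\<lambda>N. 4 * sc_sum * (sc_sum - (\<Sum>n<N. sc_coeff n))) \<longlonglongrightarrow> 4 * sc_sum * (sc_sum - sc_sum)"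
    using sc_coeff_sums unfolding sums_def by (intro tendsto_intros)
  then have err_lim: "(\<lambda>N. 4 * sc_sum * (sc_sum - (\<Sum>n<N. sc_coeff n))) \<longlonglongrightarrow> 0"
    by simp
  have "(\<lambda>N. (\<Sum>n<N. (sc_coeff n)^2) - sc_sum^2/3) \<longlonglongrightarrow> 0"
  proof (rule Lim_null_comparison[OF _ err_lim])
    show "\<forall>\<^sub>F N in sequentially. norm ((\<Sum>n<N. (sc_coeff n)^2) - sc_sum^2/3)
            \<le> 4 * sc_sum * (sc_sum - (\<Sum>n<N. sc_coeff n))"
      using eventually_gt_at_top[of 0] by eventually_elim (simp add: sc_coeff_sq_partial_error)
  qed
  then have "(\<lambda>N. ((\<Sum>n<N. (sc_coeff n)^2) - sc_sum^2/3) + sc_sum^2/3) \<longlonglongrightarrow> 0 + sc_sum^2/3"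
    by (intro tendsto_intros)
  then show ?thesis by (simp add: sums_def)
qed

theorem mainTheorem11:
  shows "summable (hyp4F3_term (1/3) (1/3) (2/3) (2/3) (4/3) (4/3) 1 1)
    \<and> hyp4F3 (1/3) (1/3) (2/3) (2/3) (4/3) (4/3) 1 1 = (Beta (1/3) (1/3))^2 / 27"
proof -
  have "hyp4F3_term (1/3) (1/3) (2/3) (2/3) (4/3) (4/3) 1 1 = (\<lambda>n. (sc_coeff n)^2)"
    by (rule ext) (rule hyp4F3_term_eq_sq)
  then have "hyp4F3_term (1/3) (1/3) (2/3) (2/3) (4/3) (4/3) 1 1 sums (sc_sum^2/3)"
    using sc_coeff_sq_sums by simp
  moreover have "sc_sum^2/3 = (Beta (1/3) (1/3))^2 / 27"
    by (simp add: sc_sum_def power2_eq_square)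
  ultimately show ?thesis
    unfolding hyp4F3_def by (simp add: sums_iff)
qed

end
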